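(* Let $\mathbb{H}\in\{\mathbb{R},\mathbb{C}\}$ and let $A\in\mathbb{H}^{m\times d}$ have the phase retrieval property. Then the set $\mathcal{K}_A=\{|Ax|:x\in\mathbb{H}^d\}\subset\mathbb{R}^m$ is not convex.
   Context: $|Ax|$ is the vector of entrywise moduli. $A$ has the phase retrieval property if for all $x,y\in\mathbb{H}^d$, $|Ax|=|Ay|$ implies $x=cy$ for some $c\in\mathbb{H}$ with $|c|=1$. *)

theory Defs
  imports "HOL-Analysis.Analysis"
begin

definition abs_meas :: "('a::real_normed_field)^'d^'m \<Rightarrow> 'a^'d \<Rightarrow> real^'m" where
  "abs_meas A x = (\<chi> i. norm ((A *v x) $ i))"

definition phase_retrieval :: "('a::real_normed_field)^'d^'m \<Rightarrow> bool" where
  "phase_retrieval A \<longleftrightarrow>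
     (\<forall>x y. abs_meas A x = abs_meas A y \<longrightarrow> (\<exists>c. norm c = 1 \<and> x = c *s y))"

end

theory Submission
  imports Defs
begin

text \<open>Suppose the range of \<open>abs_meas A\<close> is convex. Among linearly independent pairs
  \<open>(u, w)\<close> pick one for which \<open>A u\<close> and \<open>A w\<close> have the most common zeros. Maximality forces
  every \<open>z\<close> with \<open>A z\<close> vanishing on these rows to be a combination \<open>a u + b w\<close>, and after
  shearing the pair there are rows where exactly one of \<open>A u\<close>, \<open>A w\<close> vanishes. For unimodular
  \<open>g\<close> the midpoint of \<open>|A(u + g w)|\<close> and \<open>|A(u - g w)|\<close> is some \<open>|A z|\<close>; then \<open>z = a u + b w\<close>,
  the two special rows give \<open>|a| = |b| = 1\<close>, so the midpoint is \<open>|A(u + d w)|\<close> with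
  \<open>|d| = 1\<close>. Over the reals \<open>d = \<plusminus>1\<close> (take \<open>g = 1\<close>). Over the complex numbers, choose a row
  where \<open>s = (A u)\<^sub>k\<close> and \<open>t = (A w)\<^sub>k\<close> are both nonzero and rotate \<open>g\<close> so that
  \<open>|s + g t| = |s - g t|\<close>; that row then forces \<open>d = \<plusminus>g\<close>. In both cases the midpoint equals an
  endpoint, so \<open>|A(u + g w)| = |A(u - g w)|\<close>, and phase retrieval makes \<open>u + g w\<close> and
  \<open>u - g w\<close> proportional, contradicting independence.\<close>

declare matrix_vector_right_distrib [simp] matrix_vector_mult_diff_distrib [simp]
  vector_scalar_commute [simp]

lemma abs_meas_component [simp]: "abs_meas A x $ i = norm ((A *v x) $ i)"
  by (simp add: abs_meas_def)

lemma phase_retrieval_imp_injective: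
  assumes "phase_retrieval A" "A *v x = 0"
  shows "x = 0"
proof -
  have "abs_meas A x = abs_meas A 0"
    using assms(2) by (simp add: abs_meas_def)
  then obtain c where "x = c *s 0"
    using assms(1) unfolding phase_retrieval_def by blast
  then show ?thesis by simp
qed

lemma phase_retrieval_obtain_nonzero_row:
  assumes "phase_retrieval A" "x \<noteq> 0"
  obtains i where "(A *v x) $ i \<noteq> 0"
  using phase_retrieval_imp_injective[OF assms(1)] assms(2) by (metis vec_eq_iff zero_index)

lemma abs_meas_smult: "abs_meas A (c *s x) = norm c *\<^sub>R abs_meas A x"
  by (simp add: abs_meas_def vec_eq_iff norm_mult)

definition independent_pair :: "'a::field^'d \<Rightarrow> 'a^'d \<Rightarrow> bool" where
  "independent_pair u w \<longleftrightarrow> (\<forall>a b. a *s u + b *s w = 0 \<longrightarrow> a = 0 \<and> b = 0)"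

lemma independent_pair_nonzero:
  assumes "independent_pair u w"
  shows "u \<noteq> 0" "w \<noteq> 0"
  using assms[unfolded independent_pair_def, rule_format, of 1 0]
    assms[unfolded independent_pair_def, rule_format, of 0 1] by auto

lemma independent_pair_commute: "independent_pair w u \<longleftrightarrow> independent_pair u w"
  unfolding independent_pair_def by (metis add.commute)

lemma smult_shear_combination:
  fixes u w :: "'a::field^'d"
  shows "a *s u + b *s (w + c *s u) = (a + b * c) *s u + b *s w"
  by (simp add: vec_eq_iff algebra_simps)

lemma independent_pair_shear:
  assumes "independent_pair u w"
  shows "independent_pair u (w + c *s u)"
  unfolding independent_pair_def smult_shear_combination
  using assms[unfolded independent_pair_def] by fastforce

lemma independent_pair_axis:
  assumes "j \<noteq> k"
  shows "independent_pair (axis j (1::'a::field)) (axis k 1)"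
  unfolding independent_pair_def
proof (intro allI impI)
  fix a b :: 'a
  assume "a *s axis j 1 + b *s axis k 1 = 0"
  then have "(a *s axis j 1 + b *s axis k 1) $ j = 0" "(a *s axis j 1 + b *s axis k 1) $ k = 0"
    by simp_all
  then show "a = 0 \<and> b = 0" using assms by (simp add: axis_def)
qed

definition common_zeros :: "'a::field^'d^'m \<Rightarrow> 'a^'d \<Rightarrow> 'a^'d \<Rightarrow> 'm set" where
  "common_zeros A u w = {i. (A *v u) $ i = 0 \<and> (A *v w) $ i = 0}"

definition spans_vanishing_space :: "'a::field^'d^'m \<Rightarrow> 'a^'d \<Rightarrow> 'a^'d \<Rightarrow> bool" where
  "spans_vanishing_space A u w \<longleftrightarrow>
     (\<forall>z. (\<forall>i\<in>common_zeros A u w. (A *v z) $ i = 0) \<longrightarrow> (\<exists>a b. z = a *s u + b *s w))"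

lemma spans_vanishing_space_commute:
  "spans_vanishing_space A w u \<longleftrightarrow> spans_vanishing_space A u w"
  unfolding spans_vanishing_space_def common_zeros_def by (simp add: conj_commute) (metis add.commute)

lemma spans_vanishing_space_shear:
  assumes "spans_vanishing_space A u w"
  shows "spans_vanishing_space A u (w + c *s u)"
  unfolding spans_vanishing_space_def
proof (intro allI impI)
  fix z
  assume "\<forall>i\<in>common_zeros A u (w + c *s u). (A *v z) $ i = 0"
  moreover have "common_zeros A u (w + c *s u) = common_zeros A u w"
    by (auto simp: common_zeros_def)
  ultimately obtain a b where "z = a *s u + b *s w"
    using assms unfolding spans_vanishing_space_def by auto
  then have "z = (a - b * c) *s u + b *s (w + c *s u)"
    by (simp add: smult_shear_combination)
  then show "\<exists>a b. z = a *s u + b *s (w + c *s u)" by blast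
qed

lemma common_zeros_enlarge:
  fixes A :: "'a::field^'d^'m"
  assumes ind: "independent_pair u w" and not_spanning: "\<not> spans_vanishing_space A u w"
    and i: "(A *v u) $ i \<noteq> 0"
  obtains u' w' where "independent_pair u' w'" "common_zeros A u w \<subset> common_zeros A u' w'"
proof -
  obtain z where z: "\<forall>j\<in>common_zeros A u w. (A *v z) $ j = 0"
    and not_comb: "\<not> (\<exists>a b. z = a *s u + b *s w)"
    using not_spanning unfolding spans_vanishing_space_def by blast
  have ind3: "a = 0 \<and> b = 0 \<and> c = 0" if "a *s u + b *s w + c *s z = 0" for a b c
  proof (cases "c = 0")
    case True
    then show ?thesis using that ind unfolding independent_pair_def by auto
  next
    case False
    then have "z = (- a / c) *s u + (- b / c) *s w"
      using that by (simp add: vec_eq_iff field_simps) (metis add_eq_0_iff2 add.commute)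
    then show ?thesis using not_comb by blast
  qed
  \<comment> \<open>Both new vectors vanish at row \<open>i\<close>, where \<open>u\<close> does not.\<close>
  define u' where "u' = (A *v w) $ i *s u - (A *v u) $ i *s w"
  define w' where "w' = (A *v z) $ i *s u - (A *v u) $ i *s z"
  have "independent_pair u' w'"
    unfolding independent_pair_def
  proof (intro allI impI)
    fix l m
    assume "l *s u' + m *s w' = 0"
    then have "(l * (A *v w) $ i + m * (A *v z) $ i) *s u + (- l * (A *v u) $ i) *s w
        + (- m * (A *v u) $ i) *s z = 0"
      unfolding u'_def w'_def by (simp add: vec_eq_iff algebra_simps)
    then have "- l * (A *v u) $ i = 0" "- m * (A *v u) $ i = 0" using ind3 by blast+
    then show "l = 0 \<and> m = 0" using i by simp
  qed
  moreover have "common_zeros A u w \<subset> common_zeros A u' w'"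
  proof -
    have "common_zeros A u w \<subseteq> common_zeros A u' w'"
      using z unfolding common_zeros_def u'_def w'_def by auto
    moreover have "i \<in> common_zeros A u' w'" "i \<notin> common_zeros A u w"
      unfolding common_zeros_def u'_def w'_def using i by (auto simp: mult.commute)
    ultimately show ?thesis by blast
  qed
  ultimately show thesis using that by blast
qed

lemma phase_retrieval_obtain_spanning_pair:
  fixes A :: "'a::real_normed_field^'d^'m::finite"
  assumes card: "CARD('d) \<ge> 2" and pr: "phase_retrieval A"
  obtains u w where "independent_pair u w" "spans_vanishing_space A u w"
proof -
  obtain j k :: 'd where "j \<noteq> k"
    using card card_le_Suc0_iff_eq[OF finite[of "UNIV :: 'd set"]] by auto
  then have "independent_pair (axis j (1::'a)) (axis k 1)"
    by (rule independent_pair_axis)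
  then obtain p where p: "independent_pair (fst p) (snd p)"
    and p_max: "\<And>q. independent_pair (fst q) (snd q) \<Longrightarrow>
      card (common_zeros A (fst q) (snd q)) \<le> card (common_zeros A (fst p) (snd p))"
    using ex_has_greatest_nat[of "\<lambda>q. independent_pair (fst q) (snd q)" "(axis j 1, axis k 1)"
        "\<lambda>q. card (common_zeros A (fst q) (snd q))" "Suc CARD('m)"]
    by (auto simp: less_Suc_eq_le card_mono)
  have "spans_vanishing_space A (fst p) (snd p)"
  proof (rule ccontr)
    assume "\<not> spans_vanishing_space A (fst p) (snd p)"
    moreover obtain i where "(A *v fst p) $ i \<noteq> 0"
      using phase_retrieval_obtain_nonzero_row[OF pr] independent_pair_nonzero(1)[OF p] by blast
    ultimately obtain u' w' where "independent_pair u' w'"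
      and grow: "common_zeros A (fst p) (snd p) \<subset> common_zeros A u' w'"
      using common_zeros_enlarge[OF p] by blast
    moreover have "card (common_zeros A (fst p) (snd p)) < card (common_zeros A u' w')"
      using psubset_card_mono[OF finite grow] .
    ultimately show False using p_max[of "(u', w')"] by simp
  qed
  then show thesis using that p by blast
qed

lemma phase_retrieval_obtain_separated_spanning_pair:
  fixes A :: "'a::real_normed_field^'d^'m::finite"
  assumes "CARD('d) \<ge> 2" and pr: "phase_retrieval A"
  obtains u w i j where "independent_pair u w" "spans_vanishing_space A u w"
    "(A *v u) $ i = 0" "(A *v w) $ i \<noteq> 0" "(A *v u) $ j \<noteq> 0" "(A *v w) $ j = 0"
proof -
  obtain u w0 where ind0: "independent_pair u w0" and spanning0: "spans_vanishing_space A u w0"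
    using phase_retrieval_obtain_spanning_pair[OF assms] .
  obtain j where uj: "(A *v u) $ j \<noteq> 0"
    using phase_retrieval_obtain_nonzero_row[OF pr independent_pair_nonzero(1)[OF ind0]] .
  define w where "w = w0 + (- (A *v w0) $ j / (A *v u) $ j) *s u"
  have ind1: "independent_pair w u" and spanning1: "spans_vanishing_space A w u"
    unfolding w_def
    using independent_pair_shear[OF ind0] spans_vanishing_space_shear[OF spanning0]
      independent_pair_commute spans_vanishing_space_commute by blast+
  have wj: "(A *v w) $ j = 0"
    using uj by (simp add: w_def)
  obtain i where wi: "(A *v w) $ i \<noteq> 0"
    using phase_retrieval_obtain_nonzero_row[OF pr independent_pair_nonzero(1)[OF ind1]] .
  define u' where "u' = u + (- (A *v u) $ i / (A *v w) $ i) *s w"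
  have "independent_pair u' w" "spans_vanishing_space A u' w"
    unfolding u'_def
    using independent_pair_shear[OF ind1] spans_vanishing_space_shear[OF spanning1]
      independent_pair_commute spans_vanishing_space_commute by blast+
  moreover have "(A *v u') $ i = 0" "(A *v u') $ j \<noteq> 0"
    using wi wj uj by (simp_all add: u'_def)
  ultimately show thesis using that wi wj by blast
qed

lemma abs_meas_sign_flip_ne:
  fixes A :: "'a::real_normed_field^'d^'m"
  assumes pr: "phase_retrieval A" and ind: "independent_pair u w" and "g \<noteq> 0"
  shows "abs_meas A (u + g *s w) \<noteq> abs_meas A (u - g *s w)"
proof
  assume "abs_meas A (u + g *s w) = abs_meas A (u - g *s w)"
  then obtain c where "u + g *s w = c *s (u - g *s w)"
    using pr unfolding phase_retrieval_def by blast
  then have "(1 - c) *s u + (g + c * g) *s w = 0"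
    by (simp add: vec_eq_iff algebra_simps)
  then have "1 - c = 0 \<and> g + c * g = 0"
    using ind unfolding independent_pair_def by blast
  then have "g + g = 0" by auto
  then show False using \<open>g \<noteq> 0\<close> by simp
qed

lemma phase_retrieval_obtain_common_support:
  fixes A :: "'a::real_normed_field^'d^'m"
  assumes "phase_retrieval A" "independent_pair u w"
  obtains i where "(A *v u) $ i \<noteq> 0" "(A *v w) $ i \<noteq> 0"
proof -
  have "abs_meas A (u + 1 *s w) \<noteq> abs_meas A (u - 1 *s w)"
    using abs_meas_sign_flip_ne[OF assms, of 1] by simp
  then obtain i where "norm ((A *v u) $ i + (A *v w) $ i) \<noteq> norm ((A *v u) $ i - (A *v w) $ i)"
    by (auto simp: vec_eq_iff)
  then show thesis
    using that by (cases "(A *v u) $ i = 0"; cases "(A *v w) $ i = 0") (auto simp: norm_minus_commute)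
qed

lemma phase_retrieval_midpoint_ne_sign_choice:
  fixes A :: "'a::real_normed_field^'d^'m"
  assumes "phase_retrieval A" "independent_pair u w" "g \<noteq> 0" and d: "d = g \<or> d = - g"
  shows "abs_meas A (u + d *s w) \<noteq> midpoint (abs_meas A (u + g *s w)) (abs_meas A (u - g *s w))"
proof -
  have "u + (- g) *s w = u - g *s w"
    by (simp add: vec_eq_iff)
  then show ?thesis
    using d abs_meas_sign_flip_ne[OF assms(1-3)] midpoint_eq_endpoint by metis
qed

lemma convex_abs_meas_obtain_midpoint_preimage:
  fixes A :: "'a::real_normed_field^'d^'m"
  assumes convex: "convex (range (abs_meas A))" and spanning: "spans_vanishing_space A u w"
    and i: "(A *v u) $ i = 0" "(A *v w) $ i \<noteq> 0" and j: "(A *v u) $ j \<noteq> 0" "(A *v w) $ j = 0"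
    and g: "norm g = 1"
  obtains d where "norm d = 1"
    "abs_meas A (u + d *s w) = midpoint (abs_meas A (u + g *s w)) (abs_meas A (u - g *s w))"
proof -
  let ?m = "midpoint (abs_meas A (u + g *s w)) (abs_meas A (u - g *s w))"
  have "?m \<in> range (abs_meas A)"
    using convexD[OF convex rangeI rangeI, of "1/2" "1/2"]
    by (simp add: midpoint_def scaleR_right_distrib inverse_eq_divide)
  then obtain z where z: "abs_meas A z = ?m" by auto
  have z_row: "norm ((A *v z) $ k) =
      (norm ((A *v u) $ k + g * (A *v w) $ k) + norm ((A *v u) $ k - g * (A *v w) $ k)) / 2" for k
    using arg_cong[OF z, of "\<lambda>v. v $ k"] by (simp add: midpoint_def)
  have "(A *v z) $ k = 0" if "k \<in> common_zeros A u w" for k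
    using z_row[of k] that by (simp add: common_zeros_def)
  then obtain a b where z_comb: "z = a *s u + b *s w"
    using spanning unfolding spans_vanishing_space_def by blast
  then have row: "(A *v z) $ k = a * (A *v u) $ k + b * (A *v w) $ k" for k by simp
  have "norm b * norm ((A *v w) $ i) = norm ((A *v w) $ i)"
    using z_row[of i] row[of i] i g by (simp add: norm_mult)
  then have b: "norm b = 1" using i by simp
  have "norm a * norm ((A *v u) $ j) = norm ((A *v u) $ j)"
    using z_row[of j] row[of j] j by (simp add: norm_mult)
  then have a: "norm a = 1" using j by simp
  then have "a \<noteq> 0" by auto
  then have "z = a *s (u + (b / a) *s w)"
    unfolding z_comb by (simp add: vec_eq_iff algebra_simps)
  then have "abs_meas A (u + (b / a) *s w) = abs_meas A z"
    by (simp only: abs_meas_smult a scaleR_one)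
  then have "abs_meas A (u + (b / a) *s w) = ?m"
    using z by simp
  moreover have "norm (b / a) = 1" using a b by (simp add: norm_divide)
  ultimately show thesis using that by blast
qed

lemma cmod_one_plus_imag_rotation_eq:
  fixes c :: real and e :: complex
  assumes "c \<noteq> 0" "cmod e = 1" "cmod (1 + \<i> * of_real c * e) = cmod (1 + \<i> * of_real c)"
  shows "e = 1 \<or> e = -1"
proof -
  have "(1 - c * Im e)\<^sup>2 + (c * Re e)\<^sup>2 = 1 + c\<^sup>2"
    using arg_cong[OF assms(3), of "\<lambda>x. x\<^sup>2"] by (simp add: cmod_power2)
  moreover have "(Re e)\<^sup>2 + (Im e)\<^sup>2 = 1"
    using assms(2) by (metis cmod_power2 power_one)
  moreover have "(1 - c * Im e)\<^sup>2 + (c * Re e)\<^sup>2 = 1 - 2 * c * Im e + c\<^sup>2 * ((Re e)\<^sup>2 + (Im e)\<^sup>2)"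
    by (simp add: power2_eq_square algebra_simps)
  ultimately have "c * Im e = 0" by simp
  then have "Im e = 0" using assms(1) by simp
  moreover from this have "(Re e)\<^sup>2 = 1" using \<open>(Re e)\<^sup>2 + (Im e)\<^sup>2 = 1\<close> by simp
  ultimately show ?thesis by (auto simp: complex_eq_iff power2_eq_1_iff)
qed

lemma cmod_balanced_rotation:
  fixes s t :: complex
  assumes s: "s \<noteq> 0" and t: "t \<noteq> 0"
  defines "g \<equiv> \<i> * of_real (cmod t / cmod s) * s / t"
  shows "cmod g = 1"
    and "cmod (s + g * t) = cmod (s - g * t)"
    and "cmod d = 1 \<Longrightarrow> cmod (s + d * t) = cmod (s + g * t) \<Longrightarrow> d = g \<or> d = - g"
proof -
  define c where "c = cmod t / cmod s"
  have "c \<noteq> 0" using s t by (simp add: c_def)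
  have gt: "g * t = s * (\<i> * of_real c)"
    using t by (simp add: g_def c_def)
  show g: "cmod g = 1"
    using s t by (simp add: g_def norm_mult norm_divide)
  have "cmod (1 + \<i> * of_real c) = cmod (1 - \<i> * of_real c)"
    by (simp add: cmod_def)
  moreover have "s + g * t = s * (1 + \<i> * of_real c)" "s - g * t = s * (1 - \<i> * of_real c)"
    by (simp_all add: gt algebra_simps)
  ultimately show "cmod (s + g * t) = cmod (s - g * t)"
    by (simp add: norm_mult)
  assume d: "cmod d = 1" and eq: "cmod (s + d * t) = cmod (s + g * t)"
  define e where "e = d / g"
  have de: "d = g * e" using g by (auto simp: e_def)
  have "s + d * t = s * (1 + \<i> * of_real c * e)" "s + g * t = s * (1 + \<i> * of_real c)"
    unfolding de by (simp_all add: gt algebra_simps)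
  then have "cmod s * cmod (1 + \<i> * of_real c * e) = cmod s * cmod (1 + \<i> * of_real c)"
    using eq by (simp add: norm_mult)
  then have "cmod (1 + \<i> * of_real c * e) = cmod (1 + \<i> * of_real c)" using s by simp
  moreover have "cmod e = 1" using d g by (simp add: e_def norm_divide)
  ultimately have "e = 1 \<or> e = -1"
    using cmod_one_plus_imag_rotation_eq \<open>c \<noteq> 0\<close> by blast
  then show "d = g \<or> d = - g" using de by auto
qed

lemma real_not_convex_range_abs_meas:
  fixes A :: "real^'d^'m::finite"
  assumes "CARD('d) \<ge> 2" and pr: "phase_retrieval A"
  shows "\<not> convex (range (abs_meas A))"
proof
  assume convex: "convex (range (abs_meas A))"
  obtain u w i j where ind: "independent_pair u w" and spanning: "spans_vanishing_space A u w"
    and i: "(A *v u) $ i = 0" "(A *v w) $ i \<noteq> 0" and j: "(A *v u) $ j \<noteq> 0" "(A *v w) $ j = 0"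
    using phase_retrieval_obtain_separated_spanning_pair[OF assms] .
  obtain d :: real where "norm d = 1"
    and d: "abs_meas A (u + d *s w) = midpoint (abs_meas A (u + 1 *s w)) (abs_meas A (u - 1 *s w))"
    using convex_abs_meas_obtain_midpoint_preimage[OF convex spanning i j, of 1] by auto
  then have "d = 1 \<or> d = - 1" by auto
  then show False
    using phase_retrieval_midpoint_ne_sign_choice[OF pr ind, of 1] d by simp
qed

lemma complex_not_convex_range_abs_meas:
  fixes A :: "complex^'d^'m::finite"
  assumes "CARD('d) \<ge> 2" and pr: "phase_retrieval A"
  shows "\<not> convex (range (abs_meas A))"
proof
  assume convex: "convex (range (abs_meas A))"
  obtain u w i j where ind: "independent_pair u w" and spanning: "spans_vanishing_space A u w"
    and i: "(A *v u) $ i = 0" "(A *v w) $ i \<noteq> 0" and j: "(A *v u) $ j \<noteq> 0" "(A *v w) $ j = 0"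
    using phase_retrieval_obtain_separated_spanning_pair[OF assms] .
  obtain k where s: "(A *v u) $ k \<noteq> 0" and t: "(A *v w) $ k \<noteq> 0"
    using phase_retrieval_obtain_common_support[OF pr ind] .
  define g where "g = \<i> * of_real (cmod ((A *v w) $ k) / cmod ((A *v u) $ k)) * (A *v u) $ k / (A *v w) $ k"
  note balanced = cmod_balanced_rotation[OF s t, folded g_def]
  obtain d where "cmod d = 1"
    and d: "abs_meas A (u + d *s w) = midpoint (abs_meas A (u + g *s w)) (abs_meas A (u - g *s w))"
    using convex_abs_meas_obtain_midpoint_preimage[OF convex spanning i j balanced(1)] .
  moreover have "cmod ((A *v u) $ k + d * (A *v w) $ k) = cmod ((A *v u) $ k + g * (A *v w) $ k)"
    using arg_cong[OF d, of "\<lambda>v. v $ k"] balanced(2) by (simp add: midpoint_def)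
  ultimately have "d = g \<or> d = - g" using balanced(3) by blast
  moreover have "g \<noteq> 0" using balanced(1) by auto
  ultimately show False
    using phase_retrieval_midpoint_ne_sign_choice[OF pr ind] d by blast
qed

theorem lemma3p2:
  assumes "CARD('d::finite) \<ge> 2"
  shows "(\<forall>A :: real^'d^'m::finite. phase_retrieval A \<longrightarrow> \<not> convex (range (abs_meas A)))
       \<and> (\<forall>A :: complex^'d^'m::finite. phase_retrieval A \<longrightarrow> \<not> convex (range (abs_meas A)))"
  using real_not_convex_range_abs_meas[OF assms] complex_not_convex_range_abs_meas[OF assms] by blast

end
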